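(* Suppose $m$ hypotheses are tested by the Benjamini–Hochberg procedure at nominal level $\alpha$ under conditions ensuring that its global FDR satisfies $\mathbb{E}\big[V/\max\{1,R\}\big]\le\alpha$. Then for any partition of the hypotheses into classes $1,\dots,K$, the Benjamini–Hochberg procedure satisfies $$\mathbb{E}\left[\frac{\sum_{k=1}^KV_k}{\sum_{k=1}^K\max\{1,R_k\}}\right]\le\alpha .$$
   Context: Hypotheses are partitioned into $K$ classes. For class $k$, $\mathbf R_k$ is the set of hypotheses in class $k$ rejected by the procedure and $\mathbf T^k_0$ the set of true nulls in class $k$; $V_k=|\mathbf R_k\cap\mathbf T^k_0|$, $R_k=|\mathbf R_k|$, $V=\sum_kV_k$, $R=\sum_kR_k$. *)

theory Defs
  imports "HOL-Probability.Probability"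
begin

text \<open>BH_kstar = max{k in {0..m}. #{j < m. p j <= alpha k / m} >= k}
(equivalently the largest k with p_(k) <= alpha k / m; 0 if none).\<close>

definition BH_kstar :: "real \<Rightarrow> nat \<Rightarrow> (nat \<Rightarrow> real) \<Rightarrow> nat" where
  "BH_kstar \<alpha> m p =
     Max {k \<in> {0..m}. card {j \<in> {..<m}. p j \<le> \<alpha> * real k / real m} \<ge> k}"

definition BH_rej :: "real \<Rightarrow> nat \<Rightarrow> (nat \<Rightarrow> real) \<Rightarrow> nat set" where
  "BH_rej \<alpha> m p =
     (if BH_kstar \<alpha> m p = 0 then {}
      else {i \<in> {..<m}. p i \<le> \<alpha> * real (BH_kstar \<alpha> m p) / real m})"

end

theory Submission
  imports Defs
begin

(* Pointwise in the sample, the class-wise numerators add up to V, while the class-wise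
   denominators add up to at least max 1 R (each max 1 R_k bounds R_k, and there is at least
   one class).  Hence the class-pooled ratio never exceeds the false discovery proportion
   V / max 1 R, and taking expectations gives the bound from the global FDR.  Nothing
   specific to the Benjamini-Hochberg procedure enters beyond measurability of its rejection set. *)

lemma card_eq_sum_card_fibres:
  assumes "finite S" "finite J" "f ` S \<subseteq> J"
  shows "card S = (\<Sum>j\<in>J. card (S \<inter> {x. f x = j}))"
proof -
  have "(\<Sum>j\<in>J. card (S \<inter> {x. f x = j})) = (\<Sum>j\<in>J. \<Sum>x\<in>{x. x \<in> S \<and> f x = j}. 1)"
    by (simp add: Int_def)
  also have "\<dots> = (\<Sum>x\<in>S. 1)"
    by (rule sum.group[OF assms])
  finally show ?thesis by simp
qed

lemma sum_card_fibres_div_le: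
  assumes "finite R" "finite J" "J \<noteq> {}" "f ` R \<subseteq> J" "V \<subseteq> R"
  shows "(\<Sum>j\<in>J. real (card (V \<inter> {x. f x = j})))
           / (\<Sum>j\<in>J. max 1 (real (card (R \<inter> {x. f x = j}))))
         \<le> real (card V) / max 1 (real (card R))"
proof -
  have finite_V: "finite V" using assms(1,5) by (rule finite_subset[rotated])
  have numerator: "(\<Sum>j\<in>J. real (card (V \<inter> {x. f x = j}))) = real (card V)"
  proof -
    have "f ` V \<subseteq> J" using assms(4,5) by blast
    then show ?thesis using card_eq_sum_card_fibres[OF finite_V assms(2)] by simp
  qed
  have "real (card R) = (\<Sum>j\<in>J. real (card (R \<inter> {x. f x = j})))"
    using card_eq_sum_card_fibres[OF assms(1,2,4)] by simp
  also have "\<dots> \<le> (\<Sum>j\<in>J. max 1 (real (card (R \<inter> {x. f x = j}))))"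
    by (intro sum_mono) simp
  finally have "real (card R) \<le> (\<Sum>j\<in>J. max 1 (real (card (R \<inter> {x. f x = j}))))" .
  moreover have "1 \<le> (\<Sum>j\<in>J. max 1 (real (card (R \<inter> {x. f x = j}))))"
  proof -
    have "1 \<le> real (card J)" using assms(2,3) by (simp add: Suc_leI card_gt_0_iff)
    also have "\<dots> = (\<Sum>j\<in>J. 1)" by simp
    also have "\<dots> \<le> (\<Sum>j\<in>J. max 1 (real (card (R \<inter> {x. f x = j}))))"
      by (intro sum_mono) simp
    finally show ?thesis .
  qed
  ultimately show ?thesis
    unfolding numerator by (intro divide_left_mono) auto
qed

lemma card_div_max_one_le_one:
  assumes "finite R" "V \<subseteq> R"
  shows "real (card V) / max 1 (real (card R)) \<le> 1"
proof -
  have "real (card V) \<le> max 1 (real (card R))"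
    using card_mono[OF assms] by (simp add: le_max_iff_disj)
  then show ?thesis by (simp add: divide_le_eq_1_pos less_max_iff_disj)
qed

lemma BH_rej_subset: "BH_rej \<alpha> m q \<subseteq> {..<m}"
  by (auto simp: BH_rej_def)

lemma mem_BH_rej:
  "i \<in> BH_rej \<alpha> m q \<longleftrightarrow>
     BH_kstar \<alpha> m q \<noteq> 0 \<and> i < m \<and> q i \<le> \<alpha> * real (BH_kstar \<alpha> m q) / real m"
  by (auto simp: BH_rej_def)

lemma measurable_BH_kstar[measurable]:
  assumes "\<And>i. i < m \<Longrightarrow> (\<lambda>\<omega>. p \<omega> i) \<in> borel_measurable M"
  shows "(\<lambda>\<omega>. BH_kstar \<alpha> m (p \<omega>)) \<in> measurable M (count_space UNIV)"
  unfolding BH_kstar_def using assms by measurable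

lemma pred_mem_BH_rej[measurable]:
  assumes "\<And>i. i < m \<Longrightarrow> (\<lambda>\<omega>. p \<omega> i) \<in> borel_measurable M"
  shows "Measurable.pred M (\<lambda>\<omega>. i \<in> BH_rej \<alpha> m (p \<omega>))"
  unfolding mem_BH_rej using assms by measurable

lemma (in finite_measure) integrable_BH_false_discovery_proportion:
  assumes "\<And>i. i < m \<Longrightarrow> (\<lambda>\<omega>. p \<omega> i) \<in> borel_measurable M"
  shows "integrable M (\<lambda>\<omega>. real (card (BH_rej \<alpha> m (p \<omega>) \<inter> T))
                              / max 1 (real (card (BH_rej \<alpha> m (p \<omega>)))))"
proof (rule integrable_const_bound[where B = 1])
  show "AE \<omega> in M. norm (real (card (BH_rej \<alpha> m (p \<omega>) \<inter> T))
                            / max 1 (real (card (BH_rej \<alpha> m (p \<omega>))))) \<le> 1"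
    by (intro AE_I2)
      (use card_div_max_one_le_one[OF finite_subset[OF BH_rej_subset] Int_lower1] in simp)
  show "(\<lambda>\<omega>. real (card (BH_rej \<alpha> m (p \<omega>) \<inter> T)) / max 1 (real (card (BH_rej \<alpha> m (p \<omega>)))))
          \<in> borel_measurable M"
    using assms by measurable
qed

theorem corollary6:
  fixes M :: "'w measure" and p :: "'w \<Rightarrow> nat \<Rightarrow> real"
    and m K :: nat and \<alpha> :: real
    and T0 :: "nat set" and cls :: "nat \<Rightarrow> nat"
  assumes "prob_space M"
    and "m \<ge> 1" and "0 < \<alpha>" and "\<alpha> < 1"
    and "\<And>i. i < m \<Longrightarrow> (\<lambda>\<omega>. p \<omega> i) \<in> borel_measurable M"
    and "T0 \<subseteq> {..<m}"
    and "\<And>i. i < m \<Longrightarrow> cls i \<in> {1..K}"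
    and global_FDR:
      "prob_space.expectation M
         (\<lambda>\<omega>. real (card (BH_rej \<alpha> m (p \<omega>) \<inter> T0))
               / max 1 (real (card (BH_rej \<alpha> m (p \<omega>))))) \<le> \<alpha>"
  shows "prob_space.expectation M
         (\<lambda>\<omega>. (\<Sum>k=1..K. real (card (BH_rej \<alpha> m (p \<omega>) \<inter> T0 \<inter> {i. cls i = k})))
               / (\<Sum>k=1..K. max 1 (real (card (BH_rej \<alpha> m (p \<omega>) \<inter> {i. cls i = k})))))
         \<le> \<alpha>"
proof -
  interpret prob_space M by fact
  have classes_nonempty: "{1..K} \<noteq> {}" using assms(2) assms(7)[of 0] by auto
  have classes: "cls ` BH_rej \<alpha> m q \<subseteq> {1..K}" for q
    using BH_rej_subset assms(7) by blast
  show ?thesis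
    by (rule order_trans[OF integral_mono' global_FDR])
      (use integrable_BH_false_discovery_proportion[OF assms(5)]
         sum_card_fibres_div_le[OF finite_subset[OF BH_rej_subset] _ classes_nonempty classes]
       in auto)
qed

end
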